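(* For all $\eta>0$, $\alpha>0$ and $M>0$ there exists $\varepsilon>0$ such that: if $S\in\mathcal A(M,\varepsilon,\alpha)$ and $C_S$ is a minimal set of some $C^1$ diffeomorphism $f:S^1\to S^1$, then there exists $m_0=m_0(f)\in\mathbb N$ such that for every $m$-block $T$ of $C_S$ with $m>m_0$ one has $\mathcal N(g_T)<\eta$.
   Context: Setting: $k\ge2$; $I_1,\dots,I_k$ pairwise disjoint compact intervals in $[0,1)$ ordered left to right; $L\subset[0,1)$ compact interval containing $I=I_1\cup\dots\cup I_k$; $S^1=\mathbb R/\mathbb Z\cong[0,1)$. $\mathcal S^{r}(I_1,\dots,I_k,L)$: $C^r$ maps $S:I\to L$ with $S(I_j)=L$ for all $j$ and $|S'|>1$; $C_S=\{x\in I:S^n(x)\in I\ \forall n\ge1\}$. For a $C^1$ map $F$ with nonvanishing derivative on an interval $T$, $\mathcal N(F)=\sup_{x,y\in T}\log\frac{|F'(x)|}{|F'(y)|}$; for $S$ one sets $\mathcal N(S)=\max_j\sup_{x,y\in I_j}\log\frac{|S'(x)|}{|S'(y)|}$. $\mathcal A(M,\varepsilon,\alpha)$ is the set of $S\in\mathcal S^{1+\alpha}(I_1,\dots,I_k,L)$ with $\mathcal N(S)<\varepsilon$ and $|\log\frac{|S'(x)|}{|S'(y)|}|\le M|x-y|^\alpha$ for $x,y$ in a common $I_j$. Inverse branches $\phi_i=(S|_{I_i})^{-1}$, $\phi(i_1,\dots,i_m)=\phi_{i_1}\circ\dots\circ\phi_{i_m}$; $\phi(i_1,\dots,i_m)(L)$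 is an $m$-block. $J_i$ ($1\le i\le k-1$) is the open interval between $I_i$ and $I_{i+1}$; the intervals $\phi(i_1,\dots,i_r)(J_i)$ are the gaps of level $r$. A minimal set of $f$ is a nonempty closed invariant set in which every orbit is dense. For such $f$ and an $m$-block $T$, $u_T=\max\{n\in\mathbb N: S^{n-1}(f(T))\subset I\}$ (equivalently, the least $n$ such that $S^n$ maps $f(J)$ onto some $J_j$ for some gap $J\subset T$), and $g_T=S^{u_T}\circ f|_T$. *)

theory Defs
  imports "HOL-Analysis.Analysis"
begin

text \<open>Standing setting: k \<ge> 2 pairwise disjoint compact intervals
  I_j = {a j..b j} (j < k, indexed from 0), ordered left to right inside [0,1),
  and a compact interval L = {l1..l2} \<subseteq> [0,1) containing their union.\<close>

definition repeller_setting :: "nat \<Rightarrow> (nat \<Rightarrow> real) \<Rightarrow> (nat \<Rightarrow> real) \<Rightarrow> real \<Rightarrow> real \<Rightarrow> bool" where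
  "repeller_setting k a b l1 l2 \<longleftrightarrow>
     2 \<le> k \<and> 0 \<le> a 0 \<and> (\<forall>j<k. a j < b j) \<and> (\<forall>j. Suc j < k \<longrightarrow> b j < a (Suc j)) \<and>
     b (k - 1) < 1 \<and> 0 \<le> l1 \<and> l1 \<le> a 0 \<and> b (k - 1) \<le> l2 \<and> l2 < 1"

definition Iset :: "nat \<Rightarrow> (nat \<Rightarrow> real) \<Rightarrow> (nat \<Rightarrow> real) \<Rightarrow> real set" where
  "Iset k a b = (\<Union>j<k. {a j..b j})"

text \<open>S \<in> S^{1+alpha}(I_1,...,I_k,L); S' is the (one-sided at endpoints) derivative of S on each I_j.\<close>
definition in_class_S :: "nat \<Rightarrow> (nat \<Rightarrow> real) \<Rightarrow> (nat \<Rightarrow> real) \<Rightarrow> real \<Rightarrow> real \<Rightarrow> real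
    \<Rightarrow> (real \<Rightarrow> real) \<Rightarrow> (real \<Rightarrow> real) \<Rightarrow> bool" where
  "in_class_S k a b l1 l2 \<alpha> S S' \<longleftrightarrow>
     (\<forall>j<k. S ` {a j..b j} = {l1..l2}) \<and>
     (\<forall>j<k. \<forall>x\<in>{a j..b j}. (S has_real_derivative S' x) (at x within {a j..b j}) \<and> \<bar>S' x\<bar> > 1) \<and>
     (\<exists>H. \<forall>j<k. \<forall>x\<in>{a j..b j}. \<forall>y\<in>{a j..b j}. \<bar>S' x - S' y\<bar> \<le> H * \<bar>x - y\<bar> powr \<alpha>)"

text \<open>Nonlinearity N(F) on T, given the derivative F' of F on T.\<close>
definition nonlin :: "(real \<Rightarrow> real) \<Rightarrow> real set \<Rightarrow> real" where
  "nonlin F' T = (SUP p\<in>T \<times> T. ln (\<bar>F' (fst p)\<bar> / \<bar>F' (snd p)\<bar>))"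

definition nonlin_S :: "nat \<Rightarrow> (nat \<Rightarrow> real) \<Rightarrow> (nat \<Rightarrow> real) \<Rightarrow> (real \<Rightarrow> real) \<Rightarrow> real" where
  "nonlin_S k a b S' = Max ((\<lambda>j. nonlin S' {a j..b j}) ` {..<k})"

definition class_A :: "nat \<Rightarrow> (nat \<Rightarrow> real) \<Rightarrow> (nat \<Rightarrow> real) \<Rightarrow> real \<Rightarrow> real \<Rightarrow> real \<Rightarrow> real \<Rightarrow> real
    \<Rightarrow> (real \<Rightarrow> real) \<Rightarrow> (real \<Rightarrow> real) \<Rightarrow> bool" where
  "class_A k a b l1 l2 M \<epsilon> \<alpha> S S' \<longleftrightarrow>
     in_class_S k a b l1 l2 \<alpha> S S' \<and> nonlin_S k a b S' < \<epsilon> \<and>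
     (\<forall>j<k. \<forall>x\<in>{a j..b j}. \<forall>y\<in>{a j..b j}. \<bar>ln (\<bar>S' x\<bar> / \<bar>S' y\<bar>)\<bar> \<le> M * \<bar>x - y\<bar> powr \<alpha>)"

definition survivor_set :: "nat \<Rightarrow> (nat \<Rightarrow> real) \<Rightarrow> (nat \<Rightarrow> real) \<Rightarrow> (real \<Rightarrow> real) \<Rightarrow> real set" where
  "survivor_set k a b S = {x \<in> Iset k a b. \<forall>n\<ge>1. (S ^^ n) x \<in> Iset k a b}"

text \<open>Circle S^1 = R/Z identified with [0,1); a circle map is given via a lift F.\<close>
definition circle_map :: "(real \<Rightarrow> real) \<Rightarrow> real \<Rightarrow> real" where
  "circle_map F x = frac (F x)"

definition C1_circle_diffeo_lift :: "(real \<Rightarrow> real) \<Rightarrow> bool" where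
  "C1_circle_diffeo_lift F \<longleftrightarrow>
     (\<exists>F'. (\<forall>x. (F has_real_derivative F' x) (at x)) \<and> continuous_on UNIV F' \<and> (\<forall>x. F' x \<noteq> 0)) \<and>
     ((\<forall>x. F (x + 1) = F x + 1) \<or> (\<forall>x. F (x + 1) = F x - 1))"

definition is_minimal_set :: "(real \<Rightarrow> real) \<Rightarrow> real set \<Rightarrow> bool" where
  "is_minimal_set f C \<longleftrightarrow> C \<noteq> {} \<and> closed C \<and> f ` C = C \<and>
     (\<forall>x\<in>C. C \<subseteq> closure {(f ^^ n) x | n. True})"

text \<open>m-blocks phi(i_1,...,i_m)(L), phi_i the inverse branch of S on I_i.\<close>
definition is_block :: "nat \<Rightarrow> (nat \<Rightarrow> real) \<Rightarrow> (nat \<Rightarrow> real) \<Rightarrow> real \<Rightarrow> real \<Rightarrow> (real \<Rightarrow> real)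
    \<Rightarrow> nat \<Rightarrow> real set \<Rightarrow> bool" where
  "is_block k a b l1 l2 S m T \<longleftrightarrow>
     (\<exists>is. length is = m \<and> set is \<subseteq> {..<k} \<and>
        T = foldr (\<lambda>i A. the_inv_into {a i..b i} S ` A) is {l1..l2})"

text \<open>n is admissible for u_T: S^{n-1}(f(T)) is defined and contained in I.\<close>
definition return_ok :: "nat \<Rightarrow> (nat \<Rightarrow> real) \<Rightarrow> (nat \<Rightarrow> real) \<Rightarrow> (real \<Rightarrow> real) \<Rightarrow> (real \<Rightarrow> real)
    \<Rightarrow> real set \<Rightarrow> nat \<Rightarrow> bool" where
  "return_ok k a b S f T n \<longleftrightarrow> 1 \<le> n \<and> (\<forall>i<n. (S ^^ i) ` (f ` T) \<subseteq> Iset k a b)"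

end

theory Submission
  imports Defs
begin

text \<open>Small nonlinearity forces \<open>\<bar>S'\<bar>\<close> on each branch to be close to its mean value
  \<open>\<bar>L\<bar> / \<bar>I\<^sub>j\<bar> > 1\<close>, so \<open>S\<close> expands uniformly by some \<open>\<lambda> > 1\<close> and \<open>m\<close>-blocks have length
  \<open>O(\<lambda>^(-m))\<close>. Before the return time every \<open>S^i (f T)\<close> lies in a single branch, so the
  distortion of \<open>S^u \<circ> f\<close> on \<open>T\<close> is that of \<open>f\<close> plus a sum along the orbit. The \<open>j\<close>-th
  summand is below \<open>\<epsilon>\<close> and, by Hoelder continuity of \<open>ln \<bar>S'\<bar>\<close> and backward contraction,
  below \<open>M \<lambda>^(-\<alpha>(u-1-j))\<close>; the geometric mean of the two bounds sums to \<open>O(sqrt \<epsilon>)\<close>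
  independently of \<open>u\<close>. The distortion of \<open>f\<close> is small on short blocks by uniform continuity
  of \<open>ln \<bar>f'\<bar>\<close>.\<close>

lemma repeller_setting_gap:
  assumes R: "repeller_setting k a b l1 l2" and "i < j" "j < k"
  shows "b i < a j"
  using assms(2,3)
proof (induction j)
  case (Suc j)
  have "b j < a (Suc j)" "a j < b j" using R Suc.prems unfolding repeller_setting_def by auto
  then show ?case using Suc by (cases "i = j") auto
qed simp

lemma repeller_setting_branch_in_L:
  assumes R: "repeller_setting k a b l1 l2" and j: "j < k"
  shows "l1 \<le> a j" "a j < b j" "b j \<le> l2"
proof -
  have setting: "l1 \<le> a 0" "b (k - 1) \<le> l2" "\<forall>j<k. a j < b j" "2 \<le> k"
    using R unfolding repeller_setting_def by auto
  show "a j < b j" using setting j by auto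
  show "l1 \<le> a j"
    using setting repeller_setting_gap[OF R, of 0 j] j by (cases "j = 0") force+
  show "b j \<le> l2"
  proof (cases "j = k - 1")
    case False
    have "b j < a (k - 1)" "a (k - 1) < b (k - 1)"
      using setting repeller_setting_gap[OF R, of j "k - 1"] j False by auto
    then show ?thesis using setting by linarith
  qed (use setting in simp)
qed

lemma Iset_subset_L:
  assumes "repeller_setting k a b l1 l2"
  shows "Iset k a b \<subseteq> {l1..l2}"
  using repeller_setting_branch_in_L[OF assms] unfolding Iset_def by fastforce

lemma repeller_setting_branches_disjoint:
  assumes R: "repeller_setting k a b l1 l2" and "i < k" "j < k" "i \<noteq> j"
  shows "{a i..b i} \<inter> {a j..b j} = {}"
  using repeller_setting_gap[OF R, of i j] repeller_setting_gap[OF R, of j i] assms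
  by (cases "i < j") auto

lemma connected_subset_Union_disjoint_closed:
  assumes "finite I" and closed: "\<And>i. i \<in> I \<Longrightarrow> closed (U i)"
    and disj: "\<And>i j. i \<in> I \<Longrightarrow> j \<in> I \<Longrightarrow> i \<noteq> j \<Longrightarrow> U i \<inter> U j = {}"
    and C: "connected C" "C \<subseteq> (\<Union>i\<in>I. U i)" "C \<noteq> {}"
  shows "\<exists>i\<in>I. C \<subseteq> U i"
proof -
  obtain i where i: "i \<in> I" "U i \<inter> C \<noteq> {}" using C by blast
  define B where "B = (\<Union>j\<in>I - {i}. U j)"
  have "closed (U i)" "closed B" unfolding B_def using assms(1) closed i by auto
  moreover have "C \<subseteq> U i \<union> B" "U i \<inter> B = {}" unfolding B_def using C(2) disj i(1) by auto
  ultimately have "B \<inter> C = {}" using C(1) i(2) unfolding connected_closed by blast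
  then show ?thesis using i(1) \<open>C \<subseteq> U i \<union> B\<close> by blast
qed

lemma connected_subset_Iset_in_branch:
  assumes R: "repeller_setting k a b l1 l2" and C: "connected C" "C \<subseteq> Iset k a b"
  shows "\<exists>j<k. C \<subseteq> {a j..b j}"
proof (cases "C = {}")
  case True
  then show ?thesis using R unfolding repeller_setting_def by (intro exI[of _ 0]) auto
next
  case False
  then show ?thesis
    using connected_subset_Union_disjoint_closed[of "{..<k}" "\<lambda>j. {a j..b j}" C]
      repeller_setting_branches_disjoint[OF R] C unfolding Iset_def by auto
qed

lemma expansion_ratio_gt_1:
  assumes R: "repeller_setting k a b l1 l2" and j: "j < k"
  shows "1 < (l2 - l1) / (b j - a j)"
proof -
  have "2 \<le> k" using R unfolding repeller_setting_def by simp
  define i where "i = (if j = 0 then 1 else 0 :: nat)"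
  have i: "i < k" "i \<noteq> j" using \<open>2 \<le> k\<close> unfolding i_def by auto
  have "b j - a j < l2 - l1"
    using repeller_setting_branch_in_L[OF R i(1)] repeller_setting_branch_in_L[OF R j]
      repeller_setting_gap[OF R, of i j] repeller_setting_gap[OF R, of j i] i j
    by (cases "i < j") auto
  then show ?thesis using repeller_setting_branch_in_L[OF R j] by simp
qed

lemma uniform_expansion_ratio:
  assumes R: "repeller_setting k a b l1 l2"
  shows "\<exists>\<Lambda>>1. \<forall>j<k. \<Lambda> \<le> (l2 - l1) / (b j - a j)"
proof (intro exI conjI allI impI)
  let ?\<Lambda> = "Min ((\<lambda>j. (l2 - l1) / (b j - a j)) ` {..<k})"
  have "{..<k} \<noteq> {}" using R unfolding repeller_setting_def by (auto simp: lessThan_empty_iff)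
  then show "1 < ?\<Lambda>" using expansion_ratio_gt_1[OF R] by simp
  show "?\<Lambda> \<le> (l2 - l1) / (b j - a j)" if "j < k" for j
    using that by (intro Min_le) auto
qed

lemma mvt_abs_within_interval:
  assumes D: "\<forall>x\<in>{p..q}. (S has_real_derivative S' x) (at x within {p..q})"
    and x: "x \<in> {p..q}" and y: "y \<in> {p..q}"
  shows "\<exists>z\<in>{p..q}. \<bar>S y - S x\<bar> = \<bar>y - x\<bar> * \<bar>S' z\<bar>"
proof -
  have ordered: "\<exists>z\<in>{p..q}. \<bar>S y - S x\<bar> = \<bar>y - x\<bar> * \<bar>S' z\<bar>"
    if xy: "x \<in> {p..q}" "y \<in> {p..q}" "x \<le> y" for x y
  proof -
    have "\<exists>z\<in>{x..y}. S y - S x = S' z * (y - x)"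
    proof (rule mvt_very_simple)
      fix z assume "x \<le> z" "z \<le> y"
      then have "(S has_real_derivative S' z) (at z within {p..q})" using D xy by auto
      then have "(S has_real_derivative S' z) (at z within {x..y})"
        by (rule has_field_derivative_subset) (use xy in auto)
      then show "(S has_derivative (*) (S' z)) (at z within {x..y})"
        by (simp add: has_field_derivative_def)
    qed fact
    then show ?thesis using xy by (force simp: abs_mult)
  qed
  show ?thesis
    using ordered[OF x y] ordered[OF y x] by (cases "x \<le> y") (auto simp: abs_minus_commute)
qed

lemma expansion_of_derivative_lower_bound:
  assumes D: "\<forall>x\<in>{p..q}. (S has_real_derivative S' x) (at x within {p..q})"
    and lower: "\<forall>z\<in>{p..q}. lam \<le> \<bar>S' z\<bar>"
    and x: "x \<in> {p..q}" and y: "y \<in> {p..q}"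
  shows "lam * \<bar>x - y\<bar> \<le> \<bar>S x - S y\<bar>"
proof -
  obtain z where z: "z \<in> {p..q}" "\<bar>S x - S y\<bar> = \<bar>x - y\<bar> * \<bar>S' z\<bar>"
    using mvt_abs_within_interval[OF D y x] by auto
  show ?thesis unfolding z(2) using lower z(1) by (simp add: mult.commute mult_right_mono)
qed

lemma derivative_lower_bound_from_distortion:
  assumes D: "\<forall>x\<in>{p..q}. (S has_real_derivative S' x) (at x within {p..q})"
    and pq: "p < q" and cd: "c \<le> d" "{c..d} \<subseteq> S ` {p..q}"
    and nz: "\<forall>x\<in>{p..q}. S' x \<noteq> 0"
    and distortion: "\<forall>x\<in>{p..q}. \<forall>y\<in>{p..q}. ln (\<bar>S' x\<bar> / \<bar>S' y\<bar>) < \<epsilon>"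
    and z: "z \<in> {p..q}"
  shows "(d - c) / (q - p) * exp (- \<epsilon>) \<le> \<bar>S' z\<bar>"
proof -
  have "c \<in> S ` {p..q}" "d \<in> S ` {p..q}" using cd by auto
  then obtain x1 x2 where x12: "x1 \<in> {p..q}" "c = S x1" "x2 \<in> {p..q}" "d = S x2"
    by (metis imageE)
  obtain \<xi> where \<xi>: "\<xi> \<in> {p..q}" "\<bar>S x2 - S x1\<bar> = \<bar>x2 - x1\<bar> * \<bar>S' \<xi>\<bar>"
    using mvt_abs_within_interval[OF D x12(1,3)] by blast
  have "d - c = \<bar>x2 - x1\<bar> * \<bar>S' \<xi>\<bar>" using \<xi>(2) x12 cd(1) by simp
  also have "\<dots> \<le> (q - p) * \<bar>S' \<xi>\<bar>" using x12 by (intro mult_right_mono) auto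
  finally have mean: "(d - c) / (q - p) \<le> \<bar>S' \<xi>\<bar>" using pq by (simp add: divide_le_eq mult.commute)
  have pos: "0 < \<bar>S' \<xi>\<bar>" "0 < \<bar>S' z\<bar>" using nz \<xi>(1) z by auto
  have "ln (\<bar>S' \<xi>\<bar> / \<bar>S' z\<bar>) < \<epsilon>" using distortion \<xi>(1) z by blast
  then have "\<bar>S' \<xi>\<bar> / \<bar>S' z\<bar> < exp \<epsilon>" using pos by (metis divide_pos_pos exp_less_mono exp_ln)
  then have "\<bar>S' \<xi>\<bar> < exp \<epsilon> * \<bar>S' z\<bar>" using pos by (simp add: divide_less_eq)
  then have "(d - c) / (q - p) < exp \<epsilon> * \<bar>S' z\<bar>" using mean by linarith
  then have "(d - c) / (q - p) * exp (- \<epsilon>) < exp \<epsilon> * \<bar>S' z\<bar> * exp (- \<epsilon>)"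
    by (rule mult_strict_right_mono) simp
  also have "\<dots> = \<bar>S' z\<bar>" by (simp add: exp_minus_inverse mult.commute mult.left_commute)
  finally show ?thesis by simp
qed

lemma ln_ratio_le_nonlin:
  assumes "bdd_above ((\<lambda>p. ln (\<bar>F' (fst p)\<bar> / \<bar>F' (snd p)\<bar>)) ` (T \<times> T))"
    and "x \<in> T" "y \<in> T"
  shows "ln (\<bar>F' x\<bar> / \<bar>F' y\<bar>) \<le> nonlin F' T"
  unfolding nonlin_def using cSUP_upper[OF _ assms(1), of "(x, y)"] assms(2,3) by auto

lemma class_A_branchD:
  assumes A: "class_A k a b l1 l2 M \<epsilon> \<alpha> S S'" and j: "j < k"
  shows "\<forall>x\<in>{a j..b j}. (S has_real_derivative S' x) (at x within {a j..b j})"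
    "\<forall>x\<in>{a j..b j}. 1 < \<bar>S' x\<bar>" "S ` {a j..b j} = {l1..l2}" "continuous_on {a j..b j} S"
proof -
  show D: "\<forall>x\<in>{a j..b j}. (S has_real_derivative S' x) (at x within {a j..b j})"
    and "\<forall>x\<in>{a j..b j}. 1 < \<bar>S' x\<bar>" "S ` {a j..b j} = {l1..l2}"
    using A j unfolding class_A_def in_class_S_def by auto
  show "continuous_on {a j..b j} S" using D by (intro DERIV_continuous_on) auto
qed

lemma class_A_ln_ratio_less:
  assumes A: "class_A k a b l1 l2 M \<epsilon> \<alpha> S S'" and "0 \<le> \<alpha>" and j: "j < k"
    and x: "x \<in> {a j..b j}" and y: "y \<in> {a j..b j}"
  shows "ln (\<bar>S' x\<bar> / \<bar>S' y\<bar>) < \<epsilon>"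
proof -
  have holder: "\<forall>x\<in>{a j..b j}. \<forall>y\<in>{a j..b j}. \<bar>ln (\<bar>S' x\<bar> / \<bar>S' y\<bar>)\<bar> \<le> M * \<bar>x - y\<bar> powr \<alpha>"
    using A j unfolding class_A_def by auto
  have "bdd_above ((\<lambda>p. ln (\<bar>S' (fst p)\<bar> / \<bar>S' (snd p)\<bar>)) ` ({a j..b j} \<times> {a j..b j}))"
  proof (rule bdd_aboveI2)
    fix p assume p: "p \<in> {a j..b j} \<times> {a j..b j}"
    have "ln (\<bar>S' (fst p)\<bar> / \<bar>S' (snd p)\<bar>) \<le> M * \<bar>fst p - snd p\<bar> powr \<alpha>"
      using holder p by (auto simp: abs_le_iff)
    also have "\<dots> \<le> \<bar>M\<bar> * \<bar>fst p - snd p\<bar> powr \<alpha>" by (intro mult_right_mono) auto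
    also have "\<dots> \<le> \<bar>M\<bar> * (b j - a j) powr \<alpha>"
      using p \<open>0 \<le> \<alpha>\<close> by (intro mult_left_mono powr_mono2) auto
    finally show "ln (\<bar>S' (fst p)\<bar> / \<bar>S' (snd p)\<bar>) \<le> \<bar>M\<bar> * (b j - a j) powr \<alpha>" .
  qed
  then have "ln (\<bar>S' x\<bar> / \<bar>S' y\<bar>) \<le> nonlin S' {a j..b j}" using x y by (rule ln_ratio_le_nonlin)
  also have "\<dots> \<le> nonlin_S k a b S'" unfolding nonlin_S_def using j by (intro Max_ge) auto
  also have "\<dots> < \<epsilon>" using A unfolding class_A_def by auto
  finally show ?thesis .
qed

lemma class_A_epsilon_pos:
  assumes R: "repeller_setting k a b l1 l2" and A: "class_A k a b l1 l2 M \<epsilon> \<alpha> S S'" and "0 \<le> \<alpha>"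
  shows "0 < \<epsilon>"
proof -
  have "0 < k" using R unfolding repeller_setting_def by auto
  moreover have a0: "a 0 \<in> {a 0..b 0}" using repeller_setting_branch_in_L(2)[OF R \<open>0 < k\<close>] by simp
  ultimately have "1 < \<bar>S' (a 0)\<bar>" using class_A_branchD(2)[OF A] by blast
  moreover have "ln (\<bar>S' (a 0)\<bar> / \<bar>S' (a 0)\<bar>) < \<epsilon>"
    using class_A_ln_ratio_less[OF A \<open>0 \<le> \<alpha>\<close> \<open>0 < k\<close> a0 a0] .
  ultimately show ?thesis by (cases "S' (a 0) = 0") auto
qed

lemma class_A_derivative_lower_bound:
  assumes R: "repeller_setting k a b l1 l2" and A: "class_A k a b l1 l2 M \<epsilon> \<alpha> S S'"
    and "0 \<le> \<alpha>" and \<Lambda>: "0 < \<Lambda>" "\<forall>j<k. \<Lambda> \<le> (l2 - l1) / (b j - a j)" and \<epsilon>: "\<epsilon> \<le> ln \<Lambda> / 2"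
    and j: "j < k" and z: "z \<in> {a j..b j}"
  shows "sqrt \<Lambda> \<le> \<bar>S' z\<bar>"
proof -
  note branch = class_A_branchD[OF A j]
  have nz: "\<forall>x\<in>{a j..b j}. S' x \<noteq> 0" using branch(2) by force
  have distortion: "\<forall>x\<in>{a j..b j}. \<forall>y\<in>{a j..b j}. ln (\<bar>S' x\<bar> / \<bar>S' y\<bar>) < \<epsilon>"
    using class_A_ln_ratio_less[OF A \<open>0 \<le> \<alpha>\<close> j] by blast
  note L = repeller_setting_branch_in_L[OF R j]
  have exp_half_ln: "exp (ln \<Lambda> / 2) = sqrt \<Lambda>" using \<Lambda>(1) by (simp add: ln_sqrt[symmetric])
  have "sqrt \<Lambda> = \<Lambda> / exp (ln \<Lambda> / 2)"
    unfolding exp_half_ln using \<Lambda>(1) by (simp add: real_div_sqrt)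
  also have "\<dots> = \<Lambda> * exp (- (ln \<Lambda> / 2))" by (simp add: exp_minus inverse_eq_divide)
  also have "\<dots> \<le> (l2 - l1) / (b j - a j) * exp (- \<epsilon>)"
    using \<Lambda> j \<epsilon> L by (intro mult_mono) auto
  also have "\<dots> \<le> \<bar>S' z\<bar>"
    by (rule derivative_lower_bound_from_distortion[OF branch(1) L(2) _ _ nz distortion z])
      (use L branch(3) in simp_all)
  finally show ?thesis .
qed

lemma inverse_branch:
  fixes S :: "real \<Rightarrow> real"
  assumes cont: "continuous_on {p..q} S" and onto: "S ` {p..q} = Y" and "0 < lam"
    and expand: "\<forall>x\<in>{p..q}. \<forall>y\<in>{p..q}. lam * \<bar>x - y\<bar> \<le> \<bar>S x - S y\<bar>"
  shows "continuous_on Y (the_inv_into {p..q} S)"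
    and "y \<in> Y \<Longrightarrow> the_inv_into {p..q} S y \<in> {p..q}"
    and "y \<in> Y \<Longrightarrow> S (the_inv_into {p..q} S y) = y"
proof -
  have inj: "inj_on S {p..q}"
  proof (rule inj_onI)
    fix x y assume "x \<in> {p..q}" "y \<in> {p..q}" "S x = S y"
    then have "lam * \<bar>x - y\<bar> \<le> 0" using expand by fastforce
    then show "x = y" using \<open>0 < lam\<close> by (simp add: mult_le_0_iff)
  qed
  show "continuous_on Y (the_inv_into {p..q} S)"
    using continuous_on_inv_into[OF cont compact_Icc inj] onto by simp
  show "y \<in> Y \<Longrightarrow> the_inv_into {p..q} S y \<in> {p..q}"
    using the_inv_into_into[OF inj, of y "{p..q}"] onto by blast
  show "y \<in> Y \<Longrightarrow> S (the_inv_into {p..q} S y) = y"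
    using f_the_inv_into_f[OF inj, of y] onto by blast
qed

lemma block_geometry:
  assumes R: "repeller_setting k a b l1 l2"
    and cont: "\<forall>j<k. continuous_on {a j..b j} S" and onto: "\<forall>j<k. S ` {a j..b j} = {l1..l2}"
    and lam: "0 < lam"
    and expand: "\<forall>j<k. \<forall>x\<in>{a j..b j}. \<forall>y\<in>{a j..b j}. lam * \<bar>x - y\<bar> \<le> \<bar>S x - S y\<bar>"
    and T: "is_block k a b l1 l2 S m T"
  shows "T \<subseteq> {l1..l2}" "T \<noteq> {}" "connected T" "\<forall>x\<in>T. \<forall>y\<in>T. \<bar>x - y\<bar> * lam ^ m \<le> l2 - l1"
proof -
  let ?block = "\<lambda>is. foldr (\<lambda>i A. the_inv_into {a i..b i} S ` A) is {l1..l2}"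
  have "?block is \<subseteq> {l1..l2} \<and> ?block is \<noteq> {} \<and> connected (?block is) \<and>
        (\<forall>x\<in>?block is. \<forall>y\<in>?block is. \<bar>x - y\<bar> * lam ^ length is \<le> l2 - l1)"
    if "set is \<subseteq> {..<k}" for "is"
    using that
  proof (induction "is")
    case Nil
    have "l1 \<le> l2" using repeller_setting_branch_in_L[of k a b l1 l2 0] R
      unfolding repeller_setting_def by force
    then show ?case by (auto simp: abs_le_iff)
  next
    case (Cons i "is")
    let ?g = "the_inv_into {a i..b i} S" and ?B = "?block is"
    have i: "i < k" and IH: "?B \<subseteq> {l1..l2}" "?B \<noteq> {}" "connected ?B"
      "\<forall>x\<in>?B. \<forall>y\<in>?B. \<bar>x - y\<bar> * lam ^ length is \<le> l2 - l1"
      using Cons by auto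
    have "continuous_on {a i..b i} S" "S ` {a i..b i} = {l1..l2}"
      "\<forall>x\<in>{a i..b i}. \<forall>y\<in>{a i..b i}. lam * \<bar>x - y\<bar> \<le> \<bar>S x - S y\<bar>"
      using cont onto expand i by blast+
    note inverse = inverse_branch[OF this(1,2) lam this(3)]
    have g_into: "?g y \<in> {a i..b i}" and S_g: "S (?g y) = y" if "y \<in> {l1..l2}" for y
      using inverse(2,3) that by blast+
    from inverse(1) have "connected (?g ` ?B)"
      using IH(1,3) by (intro connected_continuous_image) (auto intro: continuous_on_subset)
    moreover have "?g ` ?B \<subseteq> {l1..l2}"
      using g_into IH(1) repeller_setting_branch_in_L[OF R i] by fastforce
    moreover have "\<bar>x - y\<bar> * lam ^ length (i # is) \<le> l2 - l1"
      if xy: "x \<in> ?g ` ?B" "y \<in> ?g ` ?B" for x y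
    proof -
      obtain p q where pq: "p \<in> ?B" "q \<in> ?B" "x = ?g p" "y = ?g q" using xy by blast
      have pq_L: "p \<in> {l1..l2}" "q \<in> {l1..l2}" using pq(1,2) IH(1) by blast+
      have "lam * \<bar>x - y\<bar> \<le> \<bar>S x - S y\<bar>"
        using expand i g_into[OF pq_L(1)] g_into[OF pq_L(2)] unfolding pq(3,4) by blast
      also have "\<dots> = \<bar>p - q\<bar>" using S_g pq_L unfolding pq(3,4) by simp
      finally have "lam * \<bar>x - y\<bar> * lam ^ length is \<le> \<bar>p - q\<bar> * lam ^ length is"
        using lam by (intro mult_right_mono) auto
      also have "\<dots> \<le> l2 - l1" using IH(4) pq by auto
      finally show ?thesis by (simp add: ac_simps)
    qed
    ultimately show ?case using IH(2) by simp
  qed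
  then show "T \<subseteq> {l1..l2}" "T \<noteq> {}" "connected T" "\<forall>x\<in>T. \<forall>y\<in>T. \<bar>x - y\<bar> * lam ^ m \<le> l2 - l1"
    using T unfolding is_block_def by auto
qed

lemma floor_constant_on_connected:
  fixes F :: "'a::topological_space \<Rightarrow> real" and c :: real
  assumes T: "connected T" and F: "continuous_on T F"
    and frac_le: "\<forall>y\<in>T. frac (F y) \<le> c" and "c < 1"
    and y: "y1 \<in> T" "y2 \<in> T"
  shows "\<lfloor>F y1\<rfloor> = \<lfloor>F y2\<rfloor>"
proof -
  have False if z: "z1 \<in> T" "z2 \<in> T" "\<lfloor>F z1\<rfloor> < \<lfloor>F z2\<rfloor>" for z1 z2
  proof -
    \<comment> \<open>\<open>F\<close> would have to cross \<open>t\<close>, whose fractional part \<open>(1 + c) / 2\<close> exceeds \<open>c\<close>.\<close>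
    define t where "t = real_of_int \<lfloor>F z2\<rfloor> - (1 - c) / 2"
    have "0 \<le> c" using frac_le z(1) frac_ge_0 order.trans by blast
    have "F z1 = of_int \<lfloor>F z1\<rfloor> + frac (F z1)" by (simp add: frac_def)
    moreover have "frac (F z1) \<le> c" using frac_le z(1) by blast
    moreover have "real_of_int \<lfloor>F z1\<rfloor> \<le> real_of_int \<lfloor>F z2\<rfloor> - 1" using z(3) by linarith
    ultimately have "F z1 \<le> real_of_int \<lfloor>F z2\<rfloor> - 1 + c" by linarith
    then have "F z1 \<le> t" using \<open>c < 1\<close> unfolding t_def by (simp add: field_simps)
    moreover have "t \<le> F z2"
      using \<open>c < 1\<close> of_int_floor_le[of "F z2"] unfolding t_def by argo
    moreover have "connected (F ` T)" using F T by (rule connected_continuous_image)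
    ultimately obtain y where y: "y \<in> T" "F y = t" using z(1,2) unfolding connected_iff_interval by blast
    have "(1 - c) / 2 + (1 + c) / 2 = 1" by (simp add: field_simps)
    then have "frac t = (1 + c) / 2"
      unfolding frac_unique_iff t_def using \<open>0 \<le> c\<close> \<open>c < 1\<close> by (auto simp: algebra_simps)
    then show False using frac_le y \<open>c < 1\<close> by fastforce
  qed
  then show ?thesis using y by (meson linorder_neqE)
qed

lemma continuous_on_Iset:
  assumes "\<forall>j<k. continuous_on {a j..b j} S"
  shows "continuous_on (Iset k a b) S"
  unfolding Iset_def using assms by (intro continuous_on_closed_Union) auto

lemma iterate_image_in_branch:
  assumes R: "repeller_setting k a b l1 l2" and S: "continuous_on (Iset k a b) S"
    and T: "connected T" and h: "continuous_on T h"
    and orbit: "\<forall>i<u. (S ^^ i) ` h ` T \<subseteq> Iset k a b" and i: "i < u"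
  shows "\<exists>c<k. (S ^^ i) ` h ` T \<subseteq> {a c..b c}"
proof -
  have "continuous_on T (\<lambda>y. (S ^^ i) (h y))" using i
  proof (induction i)
    case (Suc i)
    then show ?case
      using orbit[rule_format, of i] by (auto intro!: continuous_on_compose2[OF S] simp: image_image)
  qed (simp add: h)
  then have "connected ((S ^^ i) ` h ` T)" using T by (simp add: connected_continuous_image image_image)
  then show ?thesis using connected_subset_Iset_in_branch[OF R] orbit i by blast
qed

lemma iterate_has_derivative:
  assumes D: "\<forall>j<k. \<forall>x\<in>{a j..b j}. (S has_real_derivative S' x) (at x within {a j..b j})"
    and branch: "\<forall>i<u. \<exists>c<k. (S ^^ i) ` h ` T \<subseteq> {a c..b c}"
    and h: "\<forall>x\<in>T. (h has_real_derivative h' x) (at x within T)"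
    and x: "x \<in> T"
  shows "((\<lambda>y. (S ^^ u) (h y)) has_real_derivative (\<Prod>j<u. S' ((S ^^ j) (h x))) * h' x) (at x within T)"
  using branch x
proof (induction u arbitrary: x)
  case 0
  then show ?case using h by simp
next
  case (Suc u)
  obtain c where c: "c < k" "(S ^^ u) ` h ` T \<subseteq> {a c..b c}" using Suc.prems(1) by blast
  have "(S has_real_derivative S' ((S ^^ u) (h x))) (at ((S ^^ u) (h x)) within {a c..b c})"
    using D c Suc.prems(2) by blast
  then have "(S has_real_derivative S' ((S ^^ u) (h x))) (at ((S ^^ u) (h x)) within (\<lambda>y. (S ^^ u) (h y)) ` T)"
    by (rule has_field_derivative_subset) (use c in \<open>auto simp: image_image\<close>)
  from DERIV_image_chain[OF this Suc.IH] Suc.prems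
  show ?case by (simp add: comp_def ac_simps)
qed

lemma backward_contraction:
  fixes x y :: "nat \<Rightarrow> real"
  assumes "0 \<le> lam" and expand: "\<forall>j<n. lam * \<bar>x j - y j\<bar> \<le> \<bar>x (Suc j) - y (Suc j)\<bar>"
    and "j \<le> n"
  shows "\<bar>x j - y j\<bar> * lam ^ (n - j) \<le> \<bar>x n - y n\<bar>"
  using \<open>j \<le> n\<close>
proof (induction j rule: inc_induct)
  case (step j)
  have "lam ^ (n - j) = lam * lam ^ (n - Suc j)" using step.hyps by (metis Suc_diff_Suc power_Suc)
  then have "\<bar>x j - y j\<bar> * lam ^ (n - j) = lam * \<bar>x j - y j\<bar> * lam ^ (n - Suc j)" by simp
  also have "\<dots> \<le> \<bar>x (Suc j) - y (Suc j)\<bar> * lam ^ (n - Suc j)"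
    using expand step.hyps \<open>0 \<le> lam\<close> by (intro mult_right_mono) auto
  finally show ?case using step.IH by linarith
qed simp

lemma le_sqrt_mult_of_le:
  fixes t e B :: real
  assumes "t \<le> e" "t \<le> B" "0 \<le> e" "0 \<le> B"
  shows "t \<le> sqrt (e * B)"
proof (cases "t \<le> 0")
  case False
  then have "t * t \<le> e * B" using assms by (intro mult_mono) auto
  then show ?thesis by (intro real_le_rsqrt) (simp add: power2_eq_square)
next
  case True
  moreover have "0 \<le> sqrt (e * B)" using assms by simp
  ultimately show ?thesis by linarith
qed

lemma sum_reversed_powers_le:
  fixes s :: real
  assumes "0 \<le> s" "s < 1"
  shows "(\<Sum>j<u. s ^ (u - 1 - j)) \<le> 1 / (1 - s)"
proof -
  have "(\<Sum>j<u. s ^ (u - 1 - j)) = (\<Sum>j<u. s ^ j)"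
    by (simp add: sum.nat_diff_reindex[of "\<lambda>j. s ^ j", symmetric])
  also have "\<dots> = (1 - s ^ u) / (1 - s)" using assms by (simp add: sum_gp_strict)
  also have "\<dots> \<le> 1 / (1 - s)" using assms by (intro divide_right_mono) auto
  finally show ?thesis .
qed

lemma ln_abs_prod_mult:
  fixes d :: "nat \<Rightarrow> real"
  assumes "\<forall>j<u. d j \<noteq> 0" "e \<noteq> 0"
  shows "ln \<bar>(\<Prod>j<u. d j) * e\<bar> = (\<Sum>j<u. ln \<bar>d j\<bar>) + ln \<bar>e\<bar>"
proof -
  have "ln \<bar>(\<Prod>j<u. d j) * e\<bar> = ln (\<Prod>j<u. \<bar>d j\<bar>) + ln \<bar>e\<bar>"
    using assms by (simp add: abs_mult abs_prod ln_mult)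
  also have "ln (\<Prod>j<u. \<bar>d j\<bar>) = (\<Sum>j<u. ln \<bar>d j\<bar>)" using assms by (intro ln_prod) auto
  finally show ?thesis .
qed

lemma nonlin_le:
  assumes "T \<noteq> {}" and "\<And>x y. x \<in> T \<Longrightarrow> y \<in> T \<Longrightarrow> ln (\<bar>g' x\<bar> / \<bar>g' y\<bar>) \<le> B"
  shows "nonlin g' T \<le> B"
  unfolding nonlin_def using assms by (intro cSUP_least) auto

lemma class_A_ln_derivative_difference:
  assumes A: "class_A k a b l1 l2 M \<epsilon> \<alpha> S S'" and "0 \<le> \<alpha>" "0 \<le> M" and lam: "1 < lam"
    and j: "j < k" and x: "x \<in> {a j..b j}" and y: "y \<in> {a j..b j}"
    and close: "\<bar>x - y\<bar> * lam ^ m \<le> 1"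
  shows "ln \<bar>S' x\<bar> - ln \<bar>S' y\<bar> \<le> sqrt (\<epsilon> * M) * sqrt (lam powr (- \<alpha>)) ^ m"
proof -
  let ?q = "lam powr (- \<alpha>)"
  have pos: "0 < \<bar>S' x\<bar>" "0 < \<bar>S' y\<bar>" using class_A_branchD(2)[OF A j] x y by force+
  have holder: "\<bar>ln (\<bar>S' x\<bar> / \<bar>S' y\<bar>)\<bar> \<le> M * \<bar>x - y\<bar> powr \<alpha>"
    using A j x y unfolding class_A_def by blast
  have "\<bar>x - y\<bar> \<le> lam powr (- real m)"
    using close lam by (simp add: powr_minus powr_realpow field_simps)
  then have "M * \<bar>x - y\<bar> powr \<alpha> \<le> M * (lam powr (- real m)) powr \<alpha>"
    using \<open>0 \<le> \<alpha>\<close> \<open>0 \<le> M\<close> by (intro mult_left_mono powr_mono2) auto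
  also have "(lam powr (- real m)) powr \<alpha> = ?q ^ m"
    using lam by (simp add: powr_powr powr_power mult.commute)
  finally have "ln (\<bar>S' x\<bar> / \<bar>S' y\<bar>) \<le> M * ?q ^ m" using holder by linarith
  moreover have "ln (\<bar>S' x\<bar> / \<bar>S' y\<bar>) < \<epsilon>" "ln (\<bar>S' x\<bar> / \<bar>S' x\<bar>) < \<epsilon>"
    using class_A_ln_ratio_less[OF A \<open>0 \<le> \<alpha>\<close> j] x y by blast+
  moreover have "ln (\<bar>S' x\<bar> / \<bar>S' x\<bar>) = 0" using pos by simp
  ultimately have "ln (\<bar>S' x\<bar> / \<bar>S' y\<bar>) \<le> sqrt (\<epsilon> * (M * ?q ^ m))"
    using \<open>0 \<le> M\<close> by (intro le_sqrt_mult_of_le) auto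
  then show ?thesis using pos by (simp add: ln_div real_sqrt_mult real_sqrt_power mult.assoc)
qed

lemma orbit_separation_bound:
  assumes R: "repeller_setting k a b l1 l2"
    and D: "\<forall>j<k. \<forall>x\<in>{a j..b j}. (S has_real_derivative S' x) (at x within {a j..b j})"
    and LB: "\<forall>j<k. \<forall>z\<in>{a j..b j}. lam \<le> \<bar>S' z\<bar>" and "0 \<le> lam"
    and branch: "\<forall>i<u. \<exists>c<k. (S ^^ i) ` h ` T \<subseteq> {a c..b c}"
    and x: "x \<in> T" and y: "y \<in> T" and j: "j < u"
  shows "\<bar>(S ^^ j) (h x) - (S ^^ j) (h y)\<bar> * lam ^ (u - 1 - j) \<le> l2 - l1"
proof -
  let ?x = "\<lambda>i. (S ^^ i) (h x)" and ?y = "\<lambda>i. (S ^^ i) (h y)"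
  have "\<forall>i<u - 1. lam * \<bar>?x i - ?y i\<bar> \<le> \<bar>?x (Suc i) - ?y (Suc i)\<bar>"
  proof (intro allI impI)
    fix i assume "i < u - 1"
    then have "i < u" by simp
    then obtain c where "c < k" "(S ^^ i) ` h ` T \<subseteq> {a c..b c}" using branch by blast
    then have c: "c < k" "?x i \<in> {a c..b c}" "?y i \<in> {a c..b c}" using x y by blast+
    show "lam * \<bar>?x i - ?y i\<bar> \<le> \<bar>?x (Suc i) - ?y (Suc i)\<bar>"
      using expansion_of_derivative_lower_bound[of "a c" "b c" S S' lam, OF _ _ c(2,3)] D LB c(1)
      by simp
  qed
  then have "\<bar>?x j - ?y j\<bar> * lam ^ (u - 1 - j) \<le> \<bar>?x (u - 1) - ?y (u - 1)\<bar>"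
    using j \<open>0 \<le> lam\<close> by (intro backward_contraction) auto
  also have "\<dots> \<le> l2 - l1"
  proof -
    have "u - 1 < u" using j by simp
    then obtain c where "c < k" "(S ^^ (u - 1)) ` h ` T \<subseteq> {a c..b c}" using branch by blast
    then have "c < k" "?x (u - 1) \<in> {a c..b c}" "?y (u - 1) \<in> {a c..b c}" using x y by blast+
    then show ?thesis using repeller_setting_branch_in_L[OF R] by fastforce
  qed
  finally show ?thesis .
qed

lemma orbit_ln_derivative_step_bound:
  assumes R: "repeller_setting k a b l1 l2" and A: "class_A k a b l1 l2 M \<epsilon> \<alpha> S S'"
    and "0 \<le> \<alpha>" "0 \<le> M" and lam: "1 < lam" and LB: "\<forall>j<k. \<forall>z\<in>{a j..b j}. lam \<le> \<bar>S' z\<bar>"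
    and branch: "\<forall>i<u. \<exists>c<k. (S ^^ i) ` h ` T \<subseteq> {a c..b c}"
    and x: "x \<in> T" and y: "y \<in> T" and j: "j < u"
  shows "ln \<bar>S' ((S ^^ j) (h x))\<bar> - ln \<bar>S' ((S ^^ j) (h y))\<bar>
           \<le> sqrt (\<epsilon> * M) * sqrt (lam powr (- \<alpha>)) ^ (u - 1 - j)"
proof -
  obtain c where c: "c < k" "(S ^^ j) ` h ` T \<subseteq> {a c..b c}" using branch j by blast
  have D: "\<forall>j<k. \<forall>x\<in>{a j..b j}. (S has_real_derivative S' x) (at x within {a j..b j})"
    using class_A_branchD(1)[OF A] by blast
  have "\<bar>(S ^^ j) (h x) - (S ^^ j) (h y)\<bar> * lam ^ (u - 1 - j) \<le> 1"
    using orbit_separation_bound[OF R D LB _ branch x y j] lam R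
    unfolding repeller_setting_def by fastforce
  then show ?thesis
    using class_A_ln_derivative_difference[OF A \<open>0 \<le> \<alpha>\<close> \<open>0 \<le> M\<close> lam c(1)] c(2) x y by blast
qed

lemma circle_map_on_return_domain:
  assumes R: "repeller_setting k a b l1 l2" and cont: "\<forall>j<k. continuous_on {a j..b j} S"
    and FD: "\<forall>x. (F has_real_derivative F' x) (at x)"
    and T: "connected T" "T \<noteq> {}" and ret: "return_ok k a b S (circle_map F) T u"
  shows "\<forall>x\<in>T. (circle_map F has_real_derivative F' x) (at x within T)"
    and "\<forall>i<u. \<exists>c<k. (S ^^ i) ` circle_map F ` T \<subseteq> {a c..b c}"
proof -
  have orbit: "\<forall>i<u. (S ^^ i) ` circle_map F ` T \<subseteq> Iset k a b" and "1 \<le> u"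
    using ret unfolding return_ok_def by auto
  have cont_F: "continuous_on T F"
    using FD by (intro continuous_at_imp_continuous_on) (auto intro: DERIV_isCont)
  obtain x0 where "x0 \<in> T" using T(2) by blast
  have "\<forall>y\<in>T. frac (F y) \<le> l2" "l2 < 1"
    using orbit \<open>1 \<le> u\<close> Iset_subset_L[OF R] R
    unfolding circle_map_def repeller_setting_def by fastforce+
  \<comment> \<open>On the connected set \<open>T\<close> the circle map is a translate of the lift.\<close>
  then have circle_eq: "circle_map F y = F y - of_int \<lfloor>F x0\<rfloor>" if "y \<in> T" for y
    using floor_constant_on_connected[OF T(1) cont_F _ _ that \<open>x0 \<in> T\<close>]
    unfolding circle_map_def frac_def by simp
  show deriv: "\<forall>x\<in>T. (circle_map F has_real_derivative F' x) (at x within T)"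
  proof
    fix x assume "x \<in> T"
    have "((\<lambda>y. F y - of_int \<lfloor>F x0\<rfloor>) has_real_derivative F' x) (at x)"
      using FD by (auto intro!: derivative_eq_intros)
    then have "((\<lambda>y. F y - of_int \<lfloor>F x0\<rfloor>) has_real_derivative F' x) (at x within T)"
      by (rule has_field_derivative_at_within)
    then show "(circle_map F has_real_derivative F' x) (at x within T)"
      by (rule has_field_derivative_transform_within[where d=1]) (use \<open>x \<in> T\<close> circle_eq in auto)
  qed
  show "\<forall>i<u. \<exists>c<k. (S ^^ i) ` circle_map F ` T \<subseteq> {a c..b c}"
    using iterate_image_in_branch[OF R continuous_on_Iset[OF cont] T(1) DERIV_continuous_on orbit]
      deriv by blast
qed

lemma orbit_distortion_bound:
  assumes R: "repeller_setting k a b l1 l2" and A: "class_A k a b l1 l2 M \<epsilon> \<alpha> S S'"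
    and "0 < \<alpha>" "0 \<le> M" and lam: "1 < lam" and LB: "\<forall>j<k. \<forall>z\<in>{a j..b j}. lam \<le> \<bar>S' z\<bar>"
    and branch: "\<forall>i<u. \<exists>c<k. (S ^^ i) ` h ` T \<subseteq> {a c..b c}"
    and h: "\<forall>x\<in>T. (h has_real_derivative h' x) (at x within T)" and h'_nz: "\<forall>x\<in>T. h' x \<noteq> 0"
    and "T \<noteq> {}" and h'_osc: "\<forall>x\<in>T. \<forall>y\<in>T. ln \<bar>h' x\<bar> - ln \<bar>h' y\<bar> \<le> \<beta>"
  shows "\<exists>g'. (\<forall>x\<in>T. ((\<lambda>y. (S ^^ u) (h y)) has_real_derivative g' x) (at x within T) \<and> g' x \<noteq> 0) \<and>
             nonlin g' T \<le> sqrt (\<epsilon> * M) / (1 - sqrt (lam powr (- \<alpha>))) + \<beta>"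
proof -
  define s where "s = sqrt (lam powr (- \<alpha>))"
  have "lam powr (- \<alpha>) < 1" using powr_less_one[OF lam, of "- \<alpha>"] \<open>0 < \<alpha>\<close> by linarith
  then have s: "0 \<le> s" "s < 1" unfolding s_def by simp_all
  have D: "\<forall>j<k. \<forall>x\<in>{a j..b j}. (S has_real_derivative S' x) (at x within {a j..b j})"
    using class_A_branchD(1)[OF A] by blast
  have S'_nz: "\<forall>j<k. \<forall>x\<in>{a j..b j}. S' x \<noteq> 0"
    using class_A_branchD(2)[OF A] by fastforce
  define g' where "g' x = (\<Prod>j<u. S' ((S ^^ j) (h x))) * h' x" for x
  have factor_nz: "S' ((S ^^ j) (h x)) \<noteq> 0" if "j < u" "x \<in> T" for j x
    using branch S'_nz that by blast
  have g'_nz: "g' x \<noteq> 0" if "x \<in> T" for x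
    using factor_nz[OF _ that] h'_nz that unfolding g'_def by simp
  have ln_g': "ln \<bar>g' x\<bar> = (\<Sum>j<u. ln \<bar>S' ((S ^^ j) (h x))\<bar>) + ln \<bar>h' x\<bar>" if "x \<in> T" for x
    using factor_nz[OF _ that] h'_nz that unfolding g'_def by (intro ln_abs_prod_mult) auto
  have step_bound: "ln \<bar>S' ((S ^^ j) (h x))\<bar> - ln \<bar>S' ((S ^^ j) (h y))\<bar> \<le> sqrt (\<epsilon> * M) * s ^ (u - 1 - j)"
    if "x \<in> T" "y \<in> T" "j < u" for x y j
    using orbit_ln_derivative_step_bound[OF R A less_imp_le[OF \<open>0 < \<alpha>\<close>] \<open>0 \<le> M\<close> lam LB branch that]
    unfolding s_def .
  have distortion: "ln (\<bar>g' x\<bar> / \<bar>g' y\<bar>) \<le> sqrt (\<epsilon> * M) / (1 - s) + \<beta>"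
    if x: "x \<in> T" and y: "y \<in> T" for x y
  proof -
    have "ln (\<bar>g' x\<bar> / \<bar>g' y\<bar>) = ln \<bar>g' x\<bar> - ln \<bar>g' y\<bar>" using g'_nz x y by (simp add: ln_div)
    also have "\<dots> =
        (\<Sum>j<u. ln \<bar>S' ((S ^^ j) (h x))\<bar> - ln \<bar>S' ((S ^^ j) (h y))\<bar>) + (ln \<bar>h' x\<bar> - ln \<bar>h' y\<bar>)"
      unfolding ln_g'[OF x] ln_g'[OF y] by (simp add: sum_subtractf)
    also have "\<dots> \<le> sqrt (\<epsilon> * M) * (\<Sum>j<u. s ^ (u - 1 - j)) + \<beta>"
      unfolding sum_distrib_left using step_bound[OF x y] h'_osc x y by (intro add_mono sum_mono) auto
    also have "\<dots> \<le> sqrt (\<epsilon> * M) * (1 / (1 - s)) + \<beta>"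
      using sum_reversed_powers_le[OF s] class_A_epsilon_pos[OF R A] \<open>0 < \<alpha>\<close> \<open>0 \<le> M\<close>
      by (intro add_right_mono mult_left_mono) auto
    finally show ?thesis by simp
  qed
  show ?thesis
  proof (intro exI[of _ g'] conjI ballI)
    fix x assume "x \<in> T"
    show "((\<lambda>y. (S ^^ u) (h y)) has_real_derivative g' x) (at x within T)"
      using iterate_has_derivative[OF D branch h \<open>x \<in> T\<close>] unfolding g'_def .
    show "g' x \<noteq> 0" using g'_nz \<open>x \<in> T\<close> .
  next
    show "nonlin g' T \<le> sqrt (\<epsilon> * M) / (1 - sqrt (lam powr (- \<alpha>))) + \<beta>"
      unfolding s_def[symmetric] by (rule nonlin_le[OF \<open>T \<noteq> {}\<close> distortion])
  qed
qed

lemma ln_abs_oscillation_small_on_shrinking_sets: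
  fixes F' :: "real \<Rightarrow> real"
  assumes cont: "continuous_on UNIV F'" and nz: "\<forall>x. F' x \<noteq> 0" and lam: "1 < lam" and "0 < \<beta>"
  shows "\<exists>m0::nat. \<forall>m>m0. \<forall>T\<subseteq>{0..1}. (\<forall>x\<in>T. \<forall>y\<in>T. \<bar>x - y\<bar> * lam ^ m \<le> c) \<longrightarrow>
           (\<forall>x\<in>T. \<forall>y\<in>T. ln \<bar>F' x\<bar> - ln \<bar>F' y\<bar> \<le> \<beta>)"
proof -
  have "continuous_on {0..1} (\<lambda>x. ln \<bar>F' x\<bar>)"
    using nz by (intro continuous_intros continuous_on_subset[OF cont]) auto
  then have "uniformly_continuous_on {0..1} (\<lambda>x. ln \<bar>F' x\<bar>)"
    by (intro compact_uniformly_continuous) auto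
  then obtain \<delta> where "0 < \<delta>" and \<delta>: "\<And>x y. x \<in> {0..1} \<Longrightarrow> y \<in> {0..1} \<Longrightarrow> dist y x < \<delta> \<Longrightarrow>
      dist (ln \<bar>F' y\<bar>) (ln \<bar>F' x\<bar>) < \<beta>"
    unfolding uniformly_continuous_on_def using \<open>0 < \<beta>\<close> by metis
  obtain m0 where m0: "c / \<delta> < lam ^ m0" using real_arch_pow[OF lam] by blast
  have "ln \<bar>F' x\<bar> - ln \<bar>F' y\<bar> \<le> \<beta>"
    if "m0 < m" "x \<in> {0..1}" "y \<in> {0..1}" "\<bar>x - y\<bar> * lam ^ m \<le> c" for m x y
  proof -
    have "c < \<delta> * lam ^ m0" using m0 \<open>0 < \<delta>\<close> by (simp add: divide_less_eq mult.commute)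
    then have "\<bar>x - y\<bar> * lam ^ m < \<delta> * lam ^ m0" using that(4) by linarith
    also have "\<dots> \<le> \<delta> * lam ^ m" using that(1) lam \<open>0 < \<delta>\<close> by (intro mult_left_mono power_increasing) auto
    finally have "dist x y < \<delta>" using lam by (simp add: dist_real_def)
    then show ?thesis using \<delta>[OF that(3,2)] by (simp add: dist_real_def)
  qed
  then show ?thesis by blast
qed

lemma small_epsilon_exists:
  fixes c s r M :: real
  assumes "0 < c" "0 \<le> s" "s < 1" "0 < r" "0 \<le> M"
  shows "\<exists>\<epsilon>>0. \<epsilon> \<le> c \<and> sqrt (\<epsilon> * M) / (1 - s) < r"
proof (intro exI conjI)
  define \<epsilon> where "\<epsilon> = min c ((r * (1 - s))\<^sup>2 / (M + 1))"
  show "0 < \<epsilon>" "\<epsilon> \<le> c" unfolding \<epsilon>_def using assms by auto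
  have "\<epsilon> * M \<le> (r * (1 - s))\<^sup>2 / (M + 1) * M" unfolding \<epsilon>_def using assms by (intro mult_right_mono) auto
  also have "\<dots> < (r * (1 - s))\<^sup>2" using assms by (simp add: field_simps)
  finally have "sqrt (\<epsilon> * M) < r * (1 - s)"
    using assms by (metis real_sqrt_less_mono real_sqrt_abs abs_of_pos diff_gt_0_iff_gt mult_pos_pos)
  then show "sqrt (\<epsilon> * M) / (1 - s) < r" using assms by (simp add: divide_less_eq)
qed

lemma block_return_distortion_eventually_small:
  assumes R: "repeller_setting k a b l1 l2" and A: "class_A k a b l1 l2 M \<epsilon> \<alpha> S S'"
    and "0 < \<alpha>" "0 \<le> M" "0 < \<eta>"
    and \<Lambda>: "1 < \<Lambda>" "\<forall>j<k. \<Lambda> \<le> (l2 - l1) / (b j - a j)" "\<epsilon> \<le> ln \<Lambda> / 2"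
    and small: "sqrt (\<epsilon> * M) / (1 - sqrt (sqrt \<Lambda> powr (- \<alpha>))) < \<eta> / 2"
    and F: "C1_circle_diffeo_lift F"
  shows "\<exists>m0::nat. \<forall>m T u. m0 < m \<longrightarrow> is_block k a b l1 l2 S m T \<longrightarrow>
           return_ok k a b S (circle_map F) T u \<longrightarrow>
           (\<exists>g'. (\<forall>x\<in>T. ((\<lambda>y. (S ^^ u) (circle_map F y)) has_real_derivative g' x) (at x within T)
                  \<and> g' x \<noteq> 0) \<and> nonlin g' T < \<eta>)"
proof -
  let ?lam = "sqrt \<Lambda>"
  have lam: "1 < ?lam" using \<Lambda>(1) by simp
  then have lam_pos: "0 < ?lam" by linarith
  obtain F' where FD: "\<forall>x. (F has_real_derivative F' x) (at x)" and "continuous_on UNIV F'"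
    and F0: "\<forall>x. F' x \<noteq> 0" using F unfolding C1_circle_diffeo_lift_def by blast
  have LB: "\<forall>j<k. \<forall>z\<in>{a j..b j}. ?lam \<le> \<bar>S' z\<bar>"
    using class_A_derivative_lower_bound[OF R A _ _ \<Lambda>(2,3)] \<open>0 < \<alpha>\<close> \<Lambda>(1) by simp
  have cont: "\<forall>j<k. continuous_on {a j..b j} S" and onto: "\<forall>j<k. S ` {a j..b j} = {l1..l2}"
    using class_A_branchD(3,4)[OF A] by blast+
  have expand: "\<forall>j<k. \<forall>x\<in>{a j..b j}. \<forall>y\<in>{a j..b j}. ?lam * \<bar>x - y\<bar> \<le> \<bar>S x - S y\<bar>"
    using expansion_of_derivative_lower_bound class_A_branchD(1)[OF A] LB by blast
  from ln_abs_oscillation_small_on_shrinking_sets[OF \<open>continuous_on UNIV F'\<close> F0 lam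
      half_gt_zero[OF \<open>0 < \<eta>\<close>], where c = "l2 - l1"]
  obtain m0 :: nat where m0: "\<forall>m>m0. \<forall>T\<subseteq>{0..1}. (\<forall>x\<in>T. \<forall>y\<in>T. \<bar>x - y\<bar> * ?lam ^ m \<le> l2 - l1) \<longrightarrow>
      (\<forall>x\<in>T. \<forall>y\<in>T. ln \<bar>F' x\<bar> - ln \<bar>F' y\<bar> \<le> \<eta> / 2)" ..
  have "\<exists>g'. (\<forall>x\<in>T. ((\<lambda>y. (S ^^ u) (circle_map F y)) has_real_derivative g' x) (at x within T)
            \<and> g' x \<noteq> 0) \<and> nonlin g' T < \<eta>"
    if "m0 < m" and T: "is_block k a b l1 l2 S m T" and u: "return_ok k a b S (circle_map F) T u" for m T u
  proof -
    note block = block_geometry[OF R cont onto lam_pos expand T]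
    have "T \<subseteq> {0..1}" using block(1) R unfolding repeller_setting_def by force
    then have osc: "\<forall>x\<in>T. \<forall>y\<in>T. ln \<bar>F' x\<bar> - ln \<bar>F' y\<bar> \<le> \<eta> / 2"
      using m0 block(4) \<open>m0 < m\<close> by simp
    have F0_T: "\<forall>x\<in>T. F' x \<noteq> 0" using F0 by blast
    note circle = circle_map_on_return_domain[OF R cont FD block(3,2) u]
    from orbit_distortion_bound[OF R A \<open>0 < \<alpha>\<close> \<open>0 \<le> M\<close> lam LB circle(2,1) F0_T block(2) osc]
    obtain g' where "\<forall>x\<in>T. ((\<lambda>y. (S ^^ u) (circle_map F y)) has_real_derivative g' x) (at x within T)
        \<and> g' x \<noteq> 0" "nonlin g' T \<le> sqrt (\<epsilon> * M) / (1 - sqrt (sqrt \<Lambda> powr - \<alpha>)) + \<eta> / 2"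
      by blast
    moreover from this(2) small have "nonlin g' T < \<eta>" by linarith
    ultimately show ?thesis by blast
  qed
  then show ?thesis by blast
qed

lemma uniform_block_return_distortion:
  assumes R: "repeller_setting k a b l1 l2" and "0 < \<eta>" "0 < \<alpha>" "0 < M"
  shows "\<exists>\<epsilon>>0. \<forall>S S' F. class_A k a b l1 l2 M \<epsilon> \<alpha> S S' \<and> C1_circle_diffeo_lift F \<longrightarrow>
     (\<exists>m0::nat. \<forall>m T u. m0 < m \<longrightarrow> is_block k a b l1 l2 S m T \<longrightarrow>
        return_ok k a b S (circle_map F) T u \<longrightarrow>
        (\<exists>g'. (\<forall>x\<in>T. ((\<lambda>y. (S ^^ u) (circle_map F y)) has_real_derivative g' x) (at x within T)
                  \<and> g' x \<noteq> 0) \<and> nonlin g' T < \<eta>))"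
proof -
  obtain \<Lambda> where \<Lambda>: "1 < \<Lambda>" "\<forall>j<k. \<Lambda> \<le> (l2 - l1) / (b j - a j)"
    using uniform_expansion_ratio[OF R] by blast
  have "sqrt \<Lambda> powr (- \<alpha>) < 1" using powr_less_one[of "sqrt \<Lambda>" "- \<alpha>"] \<Lambda>(1) \<open>0 < \<alpha>\<close> by simp
  then obtain \<epsilon> where \<epsilon>: "0 < \<epsilon>" "\<epsilon> \<le> ln \<Lambda> / 2"
    "sqrt (\<epsilon> * M) / (1 - sqrt (sqrt \<Lambda> powr (- \<alpha>))) < \<eta> / 2"
    using small_epsilon_exists[of "ln \<Lambda> / 2" "sqrt (sqrt \<Lambda> powr (- \<alpha>))" "\<eta> / 2" M]
      \<Lambda>(1) \<open>0 < \<eta>\<close> \<open>0 < M\<close> by auto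
  show ?thesis
    by (intro exI[of _ \<epsilon>] conjI allI impI \<epsilon>(1), elim conjE,
        rule block_return_distortion_eventually_small[OF R _ \<open>0 < \<alpha>\<close> _ \<open>0 < \<eta>\<close> \<Lambda> \<epsilon>(2,3)])
      (use \<open>0 < M\<close> in simp_all)
qed

text \<open>The distortion bound holds for every admissible return time \<open>u\<close>.\<close>

theorem lemma2:
  fixes k :: nat and a b :: "nat \<Rightarrow> real" and l1 l2 :: real
  assumes "repeller_setting k a b l1 l2"
  shows "\<forall>\<eta>>0. \<forall>\<alpha>>0. \<forall>M>0. \<exists>\<epsilon>>0. \<forall>S S' F.
     class_A k a b l1 l2 M \<epsilon> \<alpha> S S' \<and> C1_circle_diffeo_lift F \<and>
     is_minimal_set (circle_map F) (survivor_set k a b S) \<longrightarrow>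
     (\<exists>m0::nat. \<forall>m T u. m > m0 \<and> is_block k a b l1 l2 S m T \<and>
        return_ok k a b S (circle_map F) T u \<and>
        (\<forall>n. return_ok k a b S (circle_map F) T n \<longrightarrow> n \<le> u) \<longrightarrow>
        (\<exists>g'. (\<forall>x\<in>T. ((\<lambda>y. (S ^^ u) (circle_map F y)) has_real_derivative g' x) (at x within T)
                  \<and> g' x \<noteq> 0) \<and>
              nonlin g' T < \<eta>))"
  using uniform_block_return_distortion[OF assms] by fast

end
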